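(* Let $(X,\tau_X)$ be a locally compact space and $(Y,\mathcal{V})$ a Hausdorff uniform space, and equip $\mathcal{C}(X,Y)$, the set of continuous point-compact multifunctions from $X$ to $Y$, with the topology of uniform convergence $\tau_{uc}$. Let $\mathcal{F}\subset\mathcal{C}(X,Y)$ be pointwise relatively compact and equicontinuous. Then the following are equivalent: (C1) $\mathcal{F}$ is relatively $\tau_{uc}$-compact; (C2) $\mathcal{F}$ satisfies the finite extension property; (C3) $\mathcal{F}$ satisfies the compact extension property.
   Context: A multifunction $f:X\to Y$ assigns to each $x$ a nonempty $f(x)\subset Y$; it is point-compact if each $f(x)$ is compact. For $V\subset Y\times Y$, $V[a]=\{w:(a,w)\in V\}$, $V[A]=\bigcup_{a\in A}V[a]$, $f(A)=\bigcup_{a\in A}f(a)$; entourages are taken symmetric. $f$ is upper semi-continuous if for each $x$ and open $W\supset f(x)$ there is an open $U_x\ni x$ with $f(U_x)\subset W$; lower semi-continuous if for each $x$ and open $W$ with $f(x)\cap W\neq\emptyset$ there is an open $U_x\ni x$ with $f(u)\cap W\neq\emptyset$ for all $u\in U_x$; continuous if both. For $V\in\mathcal{V}$ and $D\subset X$ let $$V^{\dagger}_D=\{(f,g):\ \forall x\in D\ \forall y\in f(x)\ \forall z\in g(x):\ (\{y\}\times g(x))\cap V\neq\emptyset,\ (f(x)\times\{z\})\cap V\neq\emptyset\},$$ and $V^\dagger=V^\dagger_X$. The sets $V^\dagger$ form a base of the uniformity of uniform convergence, inducing $\tau_{uc}$. The uniformity of pointwise convergence $\mathcal{W}_{pc}$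 on $\mathcal{F}$ has subbase the sets $V^\dagger_{\{x\}}\cap(\mathcal{F}\times\mathcal{F})$ ($x\in X$, $V\in\mathcal{V}$); the uniformity of uniform convergence on compacta $\mathcal{W}_{ucc}$ on $\mathcal{F}$ has base the sets $V^\dagger_D\cap(\mathcal{F}\times\mathcal{F})$ ($D\subset X$ compact, $V\in\mathcal{V}$). $\mathcal{F}$ is pointwise relatively compact if $\bigcup\{f(x):f\in\mathcal{F}\}$ is relatively compact in $Y$ for each $x$. $\mathcal{F}$ is equicontinuous if for every $x\in X$ and $V\in\mathcal{V}$ there is an open $U_x\ni x$ such that for all $f\in\mathcal{F}$: $f(U_x)\subset V[f(x)]$, and $f(u)\cap V[y]\neq\emptyset$ for all $u\in U_x$, $y\in f(x)$. $\mathcal{F}$ has the finite (resp. compact) extension property if for every $V\in\mathcal{V}$ there is $W\in\mathcal{W}_{pc}$ (resp. $W\in\mathcal{W}_{ucc}$) with $W\subset V^\dagger\cap(\mathcal{F}\times\mathcal{F})$. Relatively $\tau_{uc}$-compact means the $\tau_{uc}$-closure of $\mathcal{F}$ in $\mathcal{C}(X,Y)$ is compact. *)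

theory Defs
  imports "HOL-Analysis.Analysis"
begin

text \<open>Multifunctions X \<rightarrow> Y are modelled as functions 'a \<Rightarrow> 'b set.
  X is the topological space of type 'a, Y the uniform space of type 'b.\<close>

definition entourages :: "('b::uniform_space \<times> 'b) set set" where
  "entourages = {V. eventually (\<lambda>p. p \<in> V) uniformity \<and> (\<forall>a b. (a, b) \<in> V \<longrightarrow> (b, a) \<in> V)}"

definition usc_mf :: "('a::topological_space \<Rightarrow> 'b::topological_space set) \<Rightarrow> bool" where
  "usc_mf f \<longleftrightarrow> (\<forall>x W. open W \<and> f x \<subseteq> W \<longrightarrow>
      (\<exists>U. open U \<and> x \<in> U \<and> \<Union>(f ` U) \<subseteq> W))"

definition lsc_mf :: "('a::topological_space \<Rightarrow> 'b::topological_space set) \<Rightarrow> bool" where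
  "lsc_mf f \<longleftrightarrow> (\<forall>x W. open W \<and> f x \<inter> W \<noteq> {} \<longrightarrow>
      (\<exists>U. open U \<and> x \<in> U \<and> (\<forall>u\<in>U. f u \<inter> W \<noteq> {})))"

definition CMF :: "('a::topological_space \<Rightarrow> 'b::topological_space set) set" where
  "CMF = {f. (\<forall>x. f x \<noteq> {} \<and> compact (f x)) \<and> usc_mf f \<and> lsc_mf f}"

definition dagger :: "('b \<times> 'b) set \<Rightarrow> 'a set \<Rightarrow> (('a \<Rightarrow> 'b set) \<times> ('a \<Rightarrow> 'b set)) set" where
  "dagger V D = {(f, g). \<forall>x\<in>D. \<forall>y\<in>f x. \<forall>z\<in>g x.
      ({y} \<times> g x) \<inter> V \<noteq> {} \<and> (f x \<times> {z}) \<inter> V \<noteq> {}}"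

text \<open>Topology of uniform convergence on C(X,Y): induced by the uniformity with base
  the sets dagger V UNIV, V an entourage (restricted to C(X,Y)).\<close>
definition uc_topology :: "('a::topological_space \<Rightarrow> 'b::uniform_space set) topology" where
  "uc_topology = topology (\<lambda>U. U \<subseteq> CMF \<and>
      (\<forall>f\<in>U. \<exists>V\<in>entourages. {g \<in> CMF. (f, g) \<in> dagger V UNIV} \<subseteq> U))"


lemma entourages_Int: "V \<in> entourages \<Longrightarrow> V' \<in> entourages \<Longrightarrow> V \<inter> V' \<in> entourages"
  unfolding entourages_def by (auto intro: eventually_conj)

lemma dagger_mono: "V \<subseteq> V' \<Longrightarrow> dagger V D \<subseteq> dagger V' D"
  unfolding dagger_def by blast

lemma istopology_uc:
  "istopology (\<lambda>U. U \<subseteq> (CMF :: ('a::topological_space \<Rightarrow> 'b::uniform_space set) set) \<and>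
      (\<forall>f\<in>U. \<exists>V\<in>entourages. {g \<in> CMF. (f, g) \<in> dagger V UNIV} \<subseteq> U))"
    (is "istopology ?L")
proof -
  have 1: "?L (S \<inter> T)" if S: "?L S" and T: "?L T" for S T
  proof -
    have "\<exists>W\<in>entourages. {g \<in> CMF. (f, g) \<in> dagger W UNIV} \<subseteq> S \<inter> T" if "f \<in> S \<inter> T" for f
    proof -
      obtain V V' where "V \<in> entourages" "V' \<in> entourages"
        "{g \<in> CMF. (f, g) \<in> dagger V UNIV} \<subseteq> S" "{g \<in> CMF. (f, g) \<in> dagger V' UNIV} \<subseteq> T"
        using S T \<open>f \<in> S \<inter> T\<close> by blast
      moreover have "dagger (V \<inter> V') UNIV \<subseteq> dagger V UNIV \<inter> dagger V' UNIV"
        using dagger_mono by blast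
      ultimately show ?thesis
        by (intro bexI[of _ "V \<inter> V'"]) (auto intro: entourages_Int)
    qed
    then show ?thesis using S by blast
  qed
  have 2: "?L (\<Union>K)" if K: "\<forall>U\<in>K. ?L U" for K
  proof -
    have "\<exists>V\<in>entourages. {g \<in> CMF. (f, g) \<in> dagger V UNIV} \<subseteq> \<Union>K" if "f \<in> \<Union>K" for f
    proof -
      obtain U where "U \<in> K" "f \<in> U" using \<open>f \<in> \<Union>K\<close> by blast
      with K obtain V where "V \<in> entourages" "{g \<in> CMF. (f, g) \<in> dagger V UNIV} \<subseteq> U" by blast
      then show ?thesis using \<open>U \<in> K\<close> by blast
    qed
    then show ?thesis using K by blast
  qed
  show ?thesis unfolding istopology_def using 1 2 by blast
qed

lemma openin_uc_topology:
  "openin uc_topology U \<longleftrightarrow> U \<subseteq> CMF \<and>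
      (\<forall>f\<in>U. \<exists>V\<in>entourages. {g \<in> CMF. (f, g) \<in> dagger V UNIV} \<subseteq> U)"
  unfolding uc_topology_def topology_inverse'[OF istopology_uc] by (rule refl)

definition pointwise_rel_compact :: "('a \<Rightarrow> 'b::topological_space set) set \<Rightarrow> bool" where
  "pointwise_rel_compact F \<longleftrightarrow> (\<forall>x. compact (closure (\<Union>f\<in>F. f x)))"

definition equicontinuous_mf :: "('a::topological_space \<Rightarrow> 'b::uniform_space set) set \<Rightarrow> bool" where
  "equicontinuous_mf F \<longleftrightarrow> (\<forall>x. \<forall>V\<in>entourages. \<exists>U. open U \<and> x \<in> U \<and>
      (\<forall>f\<in>F. \<Union>(f ` U) \<subseteq> V `` f x \<and> (\<forall>u\<in>U. \<forall>y\<in>f x. f u \<inter> V `` {y} \<noteq> {})))"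

text \<open>Membership in the uniformity of pointwise convergence on F, generated by the subbase
  dagger V {x} \<inter> (F \<times> F): W contains a finite intersection of subbase elements.\<close>
definition W_pc :: "('a \<Rightarrow> 'b::uniform_space set) set \<Rightarrow> (('a \<Rightarrow> 'b set) \<times> ('a \<Rightarrow> 'b set)) set \<Rightarrow> bool" where
  "W_pc F W \<longleftrightarrow> W \<subseteq> F \<times> F \<and> (\<exists>S. finite S \<and> (\<forall>(x, V)\<in>S. V \<in> entourages) \<and>
      (F \<times> F) \<inter> (\<Inter>(x, V)\<in>S. dagger V {x}) \<subseteq> W)"

text \<open>Membership in the uniformity of uniform convergence on compacta on F.\<close>
definition W_ucc :: "('a::topological_space \<Rightarrow> 'b::uniform_space set) set \<Rightarrow> (('a \<Rightarrow> 'b set) \<times> ('a \<Rightarrow> 'b set)) set \<Rightarrow> bool" where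
  "W_ucc F W \<longleftrightarrow> W \<subseteq> F \<times> F \<and> (\<exists>D V. compact D \<and> V \<in> entourages \<and>
      (F \<times> F) \<inter> dagger V D \<subseteq> W)"

definition finite_extension_property :: "('a \<Rightarrow> 'b::uniform_space set) set \<Rightarrow> bool" where
  "finite_extension_property F \<longleftrightarrow>
     (\<forall>V\<in>entourages. \<exists>W. W_pc F W \<and> W \<subseteq> dagger V UNIV \<inter> (F \<times> F))"

definition compact_extension_property :: "('a::topological_space \<Rightarrow> 'b::uniform_space set) set \<Rightarrow> bool" where
  "compact_extension_property F \<longleftrightarrow>
     (\<forall>V\<in>entourages. \<exists>W. W_ucc F W \<and> W \<subseteq> dagger V UNIV \<inter> (F \<times> F))"

definition rel_uc_compact :: "('a::topological_space \<Rightarrow> 'b::uniform_space set) set \<Rightarrow> bool" where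
  "rel_uc_compact F \<longleftrightarrow> compactin uc_topology (uc_topology closure_of F)"

end

theory Submission
  imports Defs
begin

text \<open>If the uniform closure K of F is compact, cover it by finitely many small uniform balls;
  any two centres that are not uniformly close differ at some point, and these finitely many
  points control uniform closeness on F, which is the finite extension property. Finite sets are
  compact, and conversely equicontinuity spreads closeness at the finitely many centres of a cover
  of a compact set to the whole set, so the finite and compact extension properties agree.
  Finally, assume the finite extension property; it passes to K. Along an ultrafilter on K the
  values at each point lie in a fixed compact set, so they converge in the Hausdorff sense to a
  nonempty compact set; the extension property turns this pointwise convergence into uniform
  convergence, and a uniform limit of continuous multifunctions is continuous. Hence every
  ultrafilter on K converges in K, and K is compact.\<close>

section \<open>Entourages\<close>

lemma entourage_eventually: "V \<in> entourages \<Longrightarrow> eventually (\<lambda>p. p \<in> V) uniformity"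
  by (simp add: entourages_def)

lemma entourage_refl: "V \<in> entourages \<Longrightarrow> (y, y) \<in> V"
  using uniformity_refl[of "\<lambda>p. p \<in> V"] by (simp add: entourages_def)

lemma entourage_sym: "V \<in> entourages \<Longrightarrow> (a, b) \<in> V \<Longrightarrow> (b, a) \<in> V"
  by (simp add: entourages_def)

lemma UNIV_in_entourages: "UNIV \<in> entourages"
  by (simp add: entourages_def)

lemma Inter_in_entourages: "finite S \<Longrightarrow> S \<subseteq> entourages \<Longrightarrow> \<Inter>S \<in> entourages"
  by (induction S rule: finite_induct) (auto simp: UNIV_in_entourages entourages_Int)

lemma symmetric_entourage_in_entourages:
  assumes "eventually E uniformity"
  shows "{p. E p \<and> E (snd p, fst p)} \<in> entourages"
  using eventually_conj[OF assms uniformity_sym[OF assms]]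
  by (simp add: entourages_def case_prod_beta)

lemma entourage_subset_relcomp: "V \<in> entourages \<Longrightarrow> V \<subseteq> V O V"
  using entourage_refl by fast

lemma entourage_subset_of_relcomp3: "W \<in> entourages \<Longrightarrow> W O W O W \<subseteq> V \<Longrightarrow> W \<subseteq> V"
  using entourage_refl by fast

lemma entourage_split:
  assumes "V \<in> entourages"
  obtains W where "W \<in> entourages" "W O W \<subseteq> V"
proof -
  obtain D where D: "eventually D uniformity" "\<And>x y z. D (x, y) \<Longrightarrow> D (y, z) \<Longrightarrow> (x, z) \<in> V"
    using uniformity_transE[OF entourage_eventually[OF assms]] by metis
  show thesis
    by (rule that[OF symmetric_entourage_in_entourages[OF D(1)]]) (auto intro: D(2))
qed

lemma entourage_split3:
  assumes "V \<in> entourages"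
  obtains W where "W \<in> entourages" "W O W O W \<subseteq> V"
proof -
  obtain W1 where W1: "W1 \<in> entourages" "W1 O W1 \<subseteq> V"
    using entourage_split[OF assms] .
  obtain W where W: "W \<in> entourages" "W O W \<subseteq> W1"
    using entourage_split[OF W1(1)] .
  have "W \<subseteq> W1"
    using W(2) entourage_subset_relcomp[OF W(1)] by blast
  then have "W O W O W \<subseteq> W1 O W1"
    using W(2) by (rule relcomp_mono)
  with W(1) W1(2) show thesis
    using that by blast
qed

lemma subset_interior_entourage_Image:
  assumes "V \<in> entourages"
  shows "S \<subseteq> interior (V `` S)"
proof
  fix y assume "y \<in> S"
  have "eventually (\<lambda>z. z \<in> V `` {y}) (nhds y)"
    unfolding eventually_nhds_uniformity using entourage_eventually[OF assms]
    by (auto elim: eventually_mono)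
  then obtain G where "open G" "y \<in> G" "G \<subseteq> V `` {y}"
    unfolding eventually_nhds by auto
  moreover have "V `` {y} \<subseteq> V `` S"
    using \<open>y \<in> S\<close> by blast
  ultimately show "y \<in> interior (V `` S)"
    by (meson interiorI subset_trans)
qed

lemma open_contains_entourage_Image:
  fixes G :: "'b::uniform_space set"
  assumes "open G" "y \<in> G"
  obtains V where "V \<in> entourages" "V `` {y} \<subseteq> G"
proof -
  define E where "E = (\<lambda>(x', z). x' = y \<longrightarrow> (z::'b) \<in> G)"
  have "eventually E uniformity"
    using assms unfolding open_uniformity E_def by auto
  then show thesis
    by (rule that[OF symmetric_entourage_in_entourages]) (auto simp: E_def)
qed

lemma closure_entourages:
  fixes A :: "'b::uniform_space set"
  shows "y \<in> closure A \<longleftrightarrow> (\<forall>V\<in>entourages. \<exists>z\<in>A. (y, z) \<in> V)"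
proof
  assume y: "y \<in> closure A"
  show "\<forall>V\<in>entourages. \<exists>z\<in>A. (y, z) \<in> V"
  proof
    fix V :: "('b \<times> 'b) set" assume "V \<in> entourages"
    then have "y \<in> interior (V `` {y})"
      using subset_interior_entourage_Image by blast
    then have "A \<inter> interior (V `` {y}) \<noteq> {}"
      using y by (meson closure_iff_nhds_not_empty open_interior order_refl)
    then show "\<exists>z\<in>A. (y, z) \<in> V"
      using interior_subset by blast
  qed
next
  assume near: "\<forall>V\<in>entourages. \<exists>z\<in>A. (y, z) \<in> V"
  show "y \<in> closure A"
  proof (rule ccontr)
    assume "y \<notin> closure A"
    then obtain V where "V \<in> entourages" "V `` {y} \<subseteq> - closure A"
      using open_contains_entourage_Image[of "- closure A" y] by auto
    then show False
      using near closure_subset by blast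
  qed
qed

lemma compact_entourage_cover:
  assumes "compact C" "\<And>y. y \<in> C \<Longrightarrow> V y \<in> entourages"
  obtains Z where "Z \<subseteq> C" "finite Z" "C \<subseteq> (\<Union>y\<in>Z. V y `` {y})"
proof -
  have "y \<in> interior (V y `` {y})" if "y \<in> C" for y
    using subset_interior_entourage_Image[OF assms(2)[OF that], of "{y}"] by simp
  then have cover: "C \<subseteq> (\<Union>y\<in>C. interior (V y `` {y}))"
    by blast
  obtain Z where Z: "Z \<subseteq> C" "finite Z" "C \<subseteq> (\<Union>y\<in>Z. interior (V y `` {y}))"
    using compactE_image[OF assms(1) open_interior cover] .
  note Z(3)
  also have "(\<Union>y\<in>Z. interior (V y `` {y})) \<subseteq> (\<Union>y\<in>Z. V y `` {y})"
    by (intro UN_mono order.refl interior_subset)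
  finally show thesis
    by (rule that[OF Z(1,2)])
qed

lemma compact_entourage_Image_subset:
  fixes C :: "'b::uniform_space set"
  assumes "compact C" "open G" "C \<subseteq> G"
  obtains E where "E \<in> entourages" "E `` C \<subseteq> G"
proof -
  have "\<exists>V. V \<in> entourages \<and> V `` {y} \<subseteq> G" if "y \<in> C" for y
    by (rule open_contains_entourage_Image[OF assms(2)]) (use assms(3) that in auto)
  then obtain V where V: "\<And>y. y \<in> C \<Longrightarrow> V y \<in> entourages \<and> V y `` {y} \<subseteq> G"
    by metis
  have "\<exists>W. W \<in> entourages \<and> W O W \<subseteq> V y" if "y \<in> C" for y
    by (rule entourage_split[of "V y"]) (use V that in auto)
  then obtain W where W: "\<And>y. y \<in> C \<Longrightarrow> W y \<in> entourages \<and> W y O W y \<subseteq> V y"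
    by metis
  then have "\<And>y. y \<in> C \<Longrightarrow> W y \<in> entourages"
    by blast
  then obtain Z where Z: "Z \<subseteq> C" "finite Z" "C \<subseteq> (\<Union>y\<in>Z. W y `` {y})"
    by (rule compact_entourage_cover[OF assms(1)])
  have "\<Inter>(W ` Z) \<in> entourages"
    using Z W by (intro Inter_in_entourages) auto
  moreover have "\<Inter>(W ` Z) `` C \<subseteq> G"
  proof
    fix z assume "z \<in> \<Inter>(W ` Z) `` C"
    then obtain y d where "y \<in> C" "(y, z) \<in> \<Inter>(W ` Z)" "d \<in> Z" "(d, y) \<in> W d"
      using Z(3) by blast
    then have "(d, z) \<in> V d"
      using W Z(1) by blast
    then show "z \<in> G"
      using V \<open>d \<in> Z\<close> Z(1) by blast
  qed
  ultimately show thesis by (rule that)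
qed

section \<open>Hausdorff closeness and uniform convergence\<close>

definition hausdorff_close :: "('b \<times> 'b) set \<Rightarrow> 'b set \<Rightarrow> 'b set \<Rightarrow> bool" where
  "hausdorff_close V A B \<longleftrightarrow> (\<forall>y\<in>A. \<exists>z\<in>B. (y, z) \<in> V) \<and> (\<forall>z\<in>B. \<exists>y\<in>A. (y, z) \<in> V)"

definition close_on ::
    "('b \<times> 'b) set \<Rightarrow> 'a set \<Rightarrow> ('a \<Rightarrow> 'b set) \<Rightarrow> ('a \<Rightarrow> 'b set) \<Rightarrow> bool" where
  "close_on V D f g \<longleftrightarrow> (\<forall>x\<in>D. hausdorff_close V (f x) (g x))"

lemma hausdorff_close_refl: "V \<in> entourages \<Longrightarrow> hausdorff_close V A A"
  unfolding hausdorff_close_def using entourage_refl by blast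

lemma hausdorff_close_sym: "V \<in> entourages \<Longrightarrow> hausdorff_close V A B \<Longrightarrow> hausdorff_close V B A"
  unfolding hausdorff_close_def using entourage_sym by blast

lemma hausdorff_close_trans:
  "hausdorff_close V A B \<Longrightarrow> hausdorff_close W B C \<Longrightarrow> hausdorff_close (V O W) A C"
  unfolding hausdorff_close_def by blast

lemma hausdorff_close_mono: "V \<subseteq> W \<Longrightarrow> hausdorff_close V A B \<Longrightarrow> hausdorff_close W A B"
  unfolding hausdorff_close_def by blast

lemma close_on_refl: "V \<in> entourages \<Longrightarrow> close_on V D f f"
  by (simp add: close_on_def hausdorff_close_refl)

lemma close_on_sym: "V \<in> entourages \<Longrightarrow> close_on V D f g \<Longrightarrow> close_on V D g f"
  by (simp add: close_on_def hausdorff_close_sym)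

lemma close_on_trans: "close_on V D f g \<Longrightarrow> close_on W D g h \<Longrightarrow> close_on (V O W) D f h"
  unfolding close_on_def using hausdorff_close_trans by blast

lemma close_on_mono: "V \<subseteq> W \<Longrightarrow> D' \<subseteq> D \<Longrightarrow> close_on V D f g \<Longrightarrow> close_on W D' f g"
  unfolding close_on_def using hausdorff_close_mono by blast

lemma close_on_trans3:
  "close_on A D f g \<Longrightarrow> close_on B D g h \<Longrightarrow> close_on C D h k \<Longrightarrow> A O B O C \<subseteq> V \<Longrightarrow>
    close_on V D f k"
  by (meson close_on_mono close_on_trans order.refl)

lemma dagger_iff_close_on:
  assumes "\<And>x. x \<in> D \<Longrightarrow> f x \<noteq> {} \<and> g x \<noteq> {}"
  shows "(f, g) \<in> dagger V D \<longleftrightarrow> close_on V D f g"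
proof
  assume fg: "(f, g) \<in> dagger V D"
  show "close_on V D f g"
    unfolding close_on_def
  proof
    fix x assume "x \<in> D"
    moreover obtain y z where "y \<in> f x" "z \<in> g x"
      using assms[OF \<open>x \<in> D\<close>] by blast
    ultimately show "hausdorff_close V (f x) (g x)"
      using fg unfolding dagger_def hausdorff_close_def by blast
  qed
next
  assume "close_on V D f g"
  then show "(f, g) \<in> dagger V D"
    unfolding dagger_def close_on_def hausdorff_close_def by blast
qed

lemma CMF_nonempty: "f \<in> CMF \<Longrightarrow> f x \<noteq> {}"
  by (simp add: CMF_def)

lemma dagger_CMF_iff: "f \<in> CMF \<Longrightarrow> g \<in> CMF \<Longrightarrow> (f, g) \<in> dagger V D \<longleftrightarrow> close_on V D f g"
  by (rule dagger_iff_close_on) (simp add: CMF_nonempty)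

lemma topspace_uc_topology: "topspace uc_topology = CMF"
proof (rule subset_antisym)
  show "topspace uc_topology \<subseteq> CMF"
    unfolding topspace_def openin_uc_topology by blast
  have "openin uc_topology CMF"
    unfolding openin_uc_topology using UNIV_in_entourages by blast
  then show "CMF \<subseteq> topspace uc_topology"
    by (rule openin_subset)
qed

definition uc_ball ::
    "('b \<times> 'b) set \<Rightarrow> ('a::topological_space \<Rightarrow> 'b::uniform_space set) \<Rightarrow> ('a \<Rightarrow> 'b set) set"
  where
  "uc_ball V h = {k \<in> CMF. close_on V UNIV h k}"

lemma openin_uc_topology_ball:
  assumes "openin uc_topology T" "g \<in> T"
  shows "\<exists>V\<in>entourages. uc_ball V g \<subseteq> T"
proof -
  from assms have "g \<in> CMF"
    unfolding openin_uc_topology by blast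
  moreover from assms obtain V where "V \<in> entourages" "{k \<in> CMF. (g, k) \<in> dagger V UNIV} \<subseteq> T"
    unfolding openin_uc_topology by blast
  ultimately show ?thesis
    unfolding uc_ball_def using dagger_CMF_iff[OF \<open>g \<in> CMF\<close>] by blast
qed

text \<open>The balls themselves need not be open.\<close>

lemma uc_ball_contains_open:
  assumes "h \<in> CMF" "V \<in> entourages"
  shows "\<exists>T. openin uc_topology T \<and> h \<in> T \<and> T \<subseteq> uc_ball V h"
proof -
  define T where "T = {k \<in> CMF. \<exists>U\<in>entourages. uc_ball U k \<subseteq> uc_ball V h}"
  have "\<exists>W\<in>entourages. {k' \<in> CMF. (k, k') \<in> dagger W UNIV} \<subseteq> T" if "k \<in> T" for k
  proof -
    obtain U where U: "U \<in> entourages" "k \<in> CMF" "uc_ball U k \<subseteq> uc_ball V h"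
      using \<open>k \<in> T\<close> unfolding T_def by blast
    obtain W where W: "W \<in> entourages" "W O W \<subseteq> U"
      using entourage_split[OF U(1)] .
    have "uc_ball W k' \<subseteq> uc_ball V h" if "k' \<in> uc_ball W k" for k'
    proof
      fix k'' assume "k'' \<in> uc_ball W k'"
      with that have "close_on (W O W) UNIV k k''"
        unfolding uc_ball_def using close_on_trans by blast
      with W(2) \<open>k'' \<in> uc_ball W k'\<close> have "k'' \<in> uc_ball U k"
        unfolding uc_ball_def using close_on_mono by blast
      with U(3) show "k'' \<in> uc_ball V h"
        by blast
    qed
    then have "uc_ball W k \<subseteq> T"
      unfolding T_def using W(1) by (auto simp: uc_ball_def)
    then show ?thesis
      using W(1) dagger_CMF_iff[OF U(2)] unfolding uc_ball_def by blast
  qed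
  then have "openin uc_topology T"
    unfolding openin_uc_topology T_def by blast
  moreover have "h \<in> T"
    unfolding T_def using assms by blast
  moreover have "T \<subseteq> uc_ball V h"
    unfolding T_def uc_ball_def using close_on_refl by blast
  ultimately show ?thesis
    by blast
qed

lemma in_uc_closure_iff:
  assumes "S \<subseteq> CMF"
  shows "h \<in> uc_topology closure_of S \<longleftrightarrow>
    h \<in> CMF \<and> (\<forall>V\<in>entourages. \<exists>f\<in>S. close_on V UNIV h f)"
proof
  assume h: "h \<in> uc_topology closure_of S"
  then have "h \<in> CMF"
    using closure_of_subset_topspace[of uc_topology S] unfolding topspace_uc_topology by blast
  moreover have "\<exists>f\<in>S. close_on V UNIV h f" if V: "V \<in> entourages" for V
  proof -
    obtain T where T: "openin uc_topology T" "h \<in> T" "T \<subseteq> uc_ball V h"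
      using uc_ball_contains_open[OF \<open>h \<in> CMF\<close> V] by blast
    from h T(1,2) obtain f where "f \<in> S" "f \<in> T"
      unfolding in_closure_of by blast
    with T(3) show ?thesis
      unfolding uc_ball_def by blast
  qed
  ultimately show "h \<in> CMF \<and> (\<forall>V\<in>entourages. \<exists>f\<in>S. close_on V UNIV h f)"
    by blast
next
  assume h: "h \<in> CMF \<and> (\<forall>V\<in>entourages. \<exists>f\<in>S. close_on V UNIV h f)"
  have "\<exists>f. f \<in> S \<and> f \<in> T" if T: "h \<in> T" "openin uc_topology T" for T
  proof -
    obtain V where V: "V \<in> entourages" "uc_ball V h \<subseteq> T"
      using openin_uc_topology_ball[OF T(2,1)] by blast
    from h V(1) obtain f where "f \<in> S" "close_on V UNIV h f"
      by blast
    then show ?thesis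
      using V(2) assms unfolding uc_ball_def by blast
  qed
  then show "h \<in> uc_topology closure_of S"
    unfolding in_closure_of topspace_uc_topology using h by blast
qed

section \<open>Extension properties\<close>

definition extension_property ::
    "('a set \<Rightarrow> bool) \<Rightarrow> ('a \<Rightarrow> 'b::uniform_space set) set \<Rightarrow> bool" where
  "extension_property P F \<longleftrightarrow> (\<forall>V\<in>entourages. \<exists>D E. P D \<and> E \<in> entourages \<and>
      (\<forall>f\<in>F. \<forall>g\<in>F. close_on E D f g \<longrightarrow> close_on V UNIV f g))"

lemma extension_propertyE:
  assumes "extension_property P F" "V \<in> entourages"
  obtains D E where "P D" "E \<in> entourages"
    "\<And>f g. f \<in> F \<Longrightarrow> g \<in> F \<Longrightarrow> close_on E D f g \<Longrightarrow> close_on V UNIV f g"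
  using assms unfolding extension_property_def by blast

lemma dagger_eq_INT: "dagger V D = (\<Inter>x\<in>D. dagger V {x})"
  unfolding dagger_def by blast

lemma W_pc_iff:
  "W_pc F W \<longleftrightarrow> W \<subseteq> F \<times> F \<and>
     (\<exists>D E. finite D \<and> E \<in> entourages \<and> (F \<times> F) \<inter> dagger E D \<subseteq> W)"
proof (intro iffI conjI)
  assume "W_pc F W"
  then show "W \<subseteq> F \<times> F"
    unfolding W_pc_def by blast
  from \<open>W_pc F W\<close> obtain S where S: "finite S" "\<forall>(x, V)\<in>S. V \<in> entourages"
    "(F \<times> F) \<inter> (\<Inter>(x, V)\<in>S. dagger V {x}) \<subseteq> W"
    unfolding W_pc_def by blast
  have "\<Inter>(snd ` S) \<in> entourages"
    using S(1,2) by (intro Inter_in_entourages) auto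
  moreover have "dagger (\<Inter>(snd ` S)) (fst ` S) \<subseteq> dagger V {x}" if "(x, V) \<in> S" for x V
  proof -
    have "dagger (\<Inter>(snd ` S)) (fst ` S) \<subseteq> dagger (\<Inter>(snd ` S)) {x}"
      using that unfolding dagger_eq_INT[of _ "fst ` S"] by force
    also have "\<dots> \<subseteq> dagger V {x}"
      using that by (intro dagger_mono) force
    finally show ?thesis .
  qed
  then have "(F \<times> F) \<inter> dagger (\<Inter>(snd ` S)) (fst ` S) \<subseteq> W"
    using S(3) by blast
  ultimately show "\<exists>D E. finite D \<and> E \<in> entourages \<and> (F \<times> F) \<inter> dagger E D \<subseteq> W"
    using S(1) by blast
next
  assume "W \<subseteq> F \<times> F \<and> (\<exists>D E. finite D \<and> E \<in> entourages \<and> (F \<times> F) \<inter> dagger E D \<subseteq> W)"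
  then obtain D E where "W \<subseteq> F \<times> F" "finite D" "E \<in> entourages" "(F \<times> F) \<inter> dagger E D \<subseteq> W"
    by blast
  moreover have "(\<Inter>(x, V)\<in>(\<lambda>x. (x, E)) ` D. dagger V {x}) = dagger E D"
    unfolding dagger_eq_INT[of _ D] by auto
  ultimately show "W_pc F W"
    unfolding W_pc_def by (intro conjI exI[of _ "(\<lambda>x. (x, E)) ` D"]) auto
qed

lemma extension_property_iff_dagger:
  assumes "F \<subseteq> CMF"
  shows "extension_property P F \<longleftrightarrow> (\<forall>V\<in>entourages. \<exists>D E. P D \<and> E \<in> entourages \<and>
      (F \<times> F) \<inter> dagger E D \<subseteq> dagger V UNIV)"
proof -
  have "(\<forall>f\<in>F. \<forall>g\<in>F. close_on E D f g \<longrightarrow> close_on V UNIV f g) \<longleftrightarrow>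
      (F \<times> F) \<inter> dagger E D \<subseteq> dagger V UNIV" for E D V
    using dagger_CMF_iff assms by blast
  then show ?thesis
    unfolding extension_property_def by simp
qed

lemma ex_base_subset_iff:
  "(\<exists>W. (W \<subseteq> A \<and> (\<exists>D E. P D \<and> Q E \<and> A \<inter> B E D \<subseteq> W)) \<and> W \<subseteq> X \<inter> A) \<longleftrightarrow>
    (\<exists>D E. P D \<and> Q E \<and> A \<inter> B E D \<subseteq> X)"
proof
  assume "\<exists>W. (W \<subseteq> A \<and> (\<exists>D E. P D \<and> Q E \<and> A \<inter> B E D \<subseteq> W)) \<and> W \<subseteq> X \<inter> A"
  then obtain W D E where "P D" "Q E" "A \<inter> B E D \<subseteq> W" "W \<subseteq> X \<inter> A"
    by blast
  then show "\<exists>D E. P D \<and> Q E \<and> A \<inter> B E D \<subseteq> X"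
    by blast
next
  assume "\<exists>D E. P D \<and> Q E \<and> A \<inter> B E D \<subseteq> X"
  then obtain D E where "P D" "Q E" "A \<inter> B E D \<subseteq> X"
    by blast
  then show "\<exists>W. (W \<subseteq> A \<and> (\<exists>D E. P D \<and> Q E \<and> A \<inter> B E D \<subseteq> W)) \<and> W \<subseteq> X \<inter> A"
    by (intro exI[of _ "A \<inter> B E D"]) blast
qed

lemma finite_extension_property_iff:
  assumes "F \<subseteq> CMF"
  shows "finite_extension_property F \<longleftrightarrow> extension_property finite F"
  unfolding finite_extension_property_def W_pc_iff extension_property_iff_dagger[OF assms]
    ex_base_subset_iff ..

lemma compact_extension_property_iff:
  assumes "F \<subseteq> CMF"
  shows "compact_extension_property F \<longleftrightarrow> extension_property compact F"
  unfolding compact_extension_property_def W_ucc_def extension_property_iff_dagger[OF assms]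
    ex_base_subset_iff ..

lemma extension_property_mono:
  "(\<And>D. P D \<Longrightarrow> Q D) \<Longrightarrow> extension_property P F \<Longrightarrow> extension_property Q F"
  unfolding extension_property_def by metis

lemma extension_property_subset:
  "G \<subseteq> F \<Longrightarrow> extension_property P F \<Longrightarrow> extension_property P G"
  unfolding extension_property_def by (meson subsetD)

lemma extension_property_uc_closure:
  assumes "F \<subseteq> CMF" "extension_property P F"
  shows "extension_property P (uc_topology closure_of F)"
  unfolding extension_property_def
proof
  fix V :: "('b \<times> 'b) set" assume "V \<in> entourages"
  then obtain V' where V': "V' \<in> entourages" "V' O V' O V' \<subseteq> V"
    by (rule entourage_split3)
  obtain D E where DE: "P D" "E \<in> entourages"
    "\<And>f g. f \<in> F \<Longrightarrow> g \<in> F \<Longrightarrow> close_on E D f g \<Longrightarrow> close_on V' UNIV f g"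
    using extension_propertyE[OF assms(2) V'(1)] by blast
  obtain E' where E': "E' \<in> entourages" "E' O E' O E' \<subseteq> E"
    using DE(2) by (rule entourage_split3)
  define W where "W = E' \<inter> V'"
  have W: "W \<in> entourages" "W O W O W \<subseteq> E" "W O V' O W \<subseteq> V"
    unfolding W_def using E' V' entourages_Int by blast+
  have "close_on V UNIV h1 h2"
    if h: "h1 \<in> uc_topology closure_of F" "h2 \<in> uc_topology closure_of F" "close_on W D h1 h2" for h1 h2
  proof -
    obtain f1 f2 where f: "f1 \<in> F" "f2 \<in> F" "close_on W UNIV h1 f1" "close_on W UNIV h2 f2"
      using h(1,2) W(1) in_uc_closure_iff[OF assms(1)] by meson
    have "close_on E D f1 f2"
      using close_on_trans3[OF close_on_sym[OF W(1)] h(3) _ W(2)]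
        close_on_mono[OF order.refl subset_UNIV] f(3,4) by blast
    then have "close_on V' UNIV f1 f2"
      using DE(3) f(1,2) by blast
    then show ?thesis
      using close_on_trans3[OF f(3) _ close_on_sym[OF W(1) f(4)] W(3)] by blast
  qed
  then show "\<exists>D E. P D \<and> E \<in> entourages \<and> (\<forall>h1\<in>uc_topology closure_of F.
      \<forall>h2\<in>uc_topology closure_of F. close_on E D h1 h2 \<longrightarrow> close_on V UNIV h1 h2)"
    using DE(1) W(1) by blast
qed

lemma equicontinuous_mfD:
  assumes "equicontinuous_mf F" "V \<in> entourages"
  shows "\<exists>U. open U \<and> x \<in> U \<and> (\<forall>f\<in>F. \<forall>u\<in>U. hausdorff_close V (f x) (f u))"
proof -
  obtain U where U: "open U" "x \<in> U"
    "\<And>f. f \<in> F \<Longrightarrow> \<Union>(f ` U) \<subseteq> V `` f x \<and> (\<forall>u\<in>U. \<forall>y\<in>f x. f u \<inter> V `` {y} \<noteq> {})"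
    using assms unfolding equicontinuous_mf_def by metis
  have "hausdorff_close V (f x) (f u)" if "f \<in> F" "u \<in> U" for f u
  proof -
    have "f u \<subseteq> V `` f x" "\<forall>y\<in>f x. f u \<inter> V `` {y} \<noteq> {}"
      using U(3)[OF that(1)] that(2) by blast+
    then show ?thesis
      unfolding hausdorff_close_def by blast
  qed
  with U(1,2) show ?thesis
    by blast
qed

lemma extension_property_compact_imp_finite:
  assumes "equicontinuous_mf F" "extension_property compact F"
  shows "extension_property finite F"
  unfolding extension_property_def
proof
  fix V :: "('b \<times> 'b) set" assume "V \<in> entourages"
  obtain D E where DE: "compact D" "E \<in> entourages"
    "\<And>f g. f \<in> F \<Longrightarrow> g \<in> F \<Longrightarrow> close_on E D f g \<Longrightarrow> close_on V UNIV f g"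
    using extension_propertyE[OF assms(2) \<open>V \<in> entourages\<close>] by blast
  obtain W where W: "W \<in> entourages" "W O W O W \<subseteq> E"
    using DE(2) by (rule entourage_split3)
  have "\<forall>x. \<exists>U. open U \<and> x \<in> U \<and> (\<forall>f\<in>F. \<forall>u\<in>U. hausdorff_close W (f x) (f u))"
    using equicontinuous_mfD[OF assms(1) W(1)] by blast
  then obtain U where U:
    "\<And>x. open (U x) \<and> x \<in> U x \<and> (\<forall>f\<in>F. \<forall>u\<in>U x. hausdorff_close W (f x) (f u))"
    by (metis choice)
  then have "\<And>x. x \<in> D \<Longrightarrow> open (U x)" "D \<subseteq> (\<Union>x\<in>D. U x)"
    by blast+
  then obtain P where P: "P \<subseteq> D" "finite P" "D \<subseteq> (\<Union>p\<in>P. U p)"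
    by (rule compactE_image[OF DE(1)])
  have "close_on E D f g" if fg: "f \<in> F" "g \<in> F" "close_on W P f g" for f g
    unfolding close_on_def
  proof
    fix x assume "x \<in> D"
    then obtain p where "p \<in> P" "x \<in> U p"
      using P(3) by blast
    have "hausdorff_close W (f x) (f p)"
      using U \<open>x \<in> U p\<close> fg(1) hausdorff_close_sym[OF W(1)] by blast
    moreover have "hausdorff_close W (f p) (g p)"
      using fg(3) \<open>p \<in> P\<close> unfolding close_on_def by blast
    moreover have "hausdorff_close W (g p) (g x)"
      using U \<open>x \<in> U p\<close> fg(2) by blast
    ultimately have "hausdorff_close (W O W O W) (f x) (g x)"
      by (intro hausdorff_close_trans)
    then show "hausdorff_close E (f x) (g x)"
      using W(2) by (rule hausdorff_close_mono[rotated])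
  qed
  then show "\<exists>D E. finite D \<and> E \<in> entourages \<and>
      (\<forall>f\<in>F. \<forall>g\<in>F. close_on E D f g \<longrightarrow> close_on V UNIV f g)"
    using P(2) W(1) DE(3) by blast
qed

lemma finite_set_decides_close_on:
  fixes G :: "('a \<Rightarrow> 'b set) set"
  assumes "finite G"
  obtains P where "finite P"
    "\<And>g g'. g \<in> G \<Longrightarrow> g' \<in> G \<Longrightarrow> close_on V P g g' \<Longrightarrow> close_on V UNIV g g'"
proof
  define witness where
    "witness = (\<lambda>(g, g'). SOME x :: 'a. \<not> hausdorff_close V (g x) (g' x))"
  show "finite (witness ` (G \<times> G))"
    using assms by simp
  fix g g' assume g: "g \<in> G" "g' \<in> G" and close: "close_on V (witness ` (G \<times> G)) g g'"
  show "close_on V UNIV g g'"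
  proof (rule ccontr)
    assume "\<not> close_on V UNIV g g'"
    then have "\<exists>x. \<not> hausdorff_close V (g x) (g' x)"
      unfolding close_on_def by blast
    then have "\<not> hausdorff_close V (g (witness (g, g'))) (g' (witness (g, g')))"
      unfolding witness_def split by (rule someI_ex)
    moreover have "witness (g, g') \<in> witness ` (G \<times> G)"
      using g by blast
    ultimately show False
      using close unfolding close_on_def by blast
  qed
qed

lemma compactin_uc_imp_extension_property:
  fixes K :: "('a::topological_space \<Rightarrow> 'b::uniform_space set) set"
  assumes "compactin uc_topology K"
  shows "extension_property finite K"
  unfolding extension_property_def
proof
  fix V :: "('b \<times> 'b) set" assume "V \<in> entourages"
  then obtain W1 where W1: "W1 \<in> entourages" "W1 O W1 O W1 \<subseteq> V"
    by (rule entourage_split3)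
  obtain W where W: "W \<in> entourages" "W O W O W \<subseteq> W1"
    using W1(1) by (rule entourage_split3)
  have "K \<subseteq> CMF"
    using compactin_subset_topspace[OF assms] by (simp add: topspace_uc_topology)
  have "\<exists>T. openin uc_topology T \<and> g \<in> T \<and> T \<subseteq> uc_ball W g" if "g \<in> K" for g
    using uc_ball_contains_open[OF _ W(1)] \<open>K \<subseteq> CMF\<close> that by blast
  then obtain T where T:
    "\<And>g. g \<in> K \<Longrightarrow> openin uc_topology (T g) \<and> g \<in> T g \<and> T g \<subseteq> uc_ball W g"
    by metis
  then have "\<exists>\<G>. finite \<G> \<and> \<G> \<subseteq> T ` K \<and> K \<subseteq> \<Union>\<G>"
    by (intro compactinD[OF assms]) blast+
  then obtain G where G: "G \<subseteq> K" "finite G" "K \<subseteq> (\<Union>g\<in>G. T g)"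
    by (metis finite_subset_image)
  obtain P where P: "finite P"
    "\<And>g g'. g \<in> G \<Longrightarrow> g' \<in> G \<Longrightarrow> close_on (W O W O W) P g g' \<Longrightarrow>
      close_on (W O W O W) UNIV g g'"
    using finite_set_decides_close_on[OF G(2)] by blast
  text \<open>Members of K that are close on P have nearby centres that are close on P, hence
    everywhere.\<close>
  have "close_on V UNIV f h" if fh: "f \<in> K" "h \<in> K" "close_on W P f h" for f h
  proof -
    have centre: "\<exists>g\<in>G. close_on W UNIV g k" if k: "k \<in> K" for k
    proof -
      obtain g where "g \<in> G" "k \<in> T g"
        using G(3) k by blast
      then show ?thesis
        using T[of g] G(1) unfolding uc_ball_def by blast
    qed
    obtain g g' where g: "g \<in> G" "g' \<in> G" "close_on W UNIV g f" "close_on W UNIV g' h"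
      using centre[OF fh(1)] centre[OF fh(2)] by blast
    have "close_on W P g f"
      using g(3) by (rule close_on_mono[OF order.refl subset_UNIV])
    moreover have "close_on W P h g'"
      using close_on_sym[OF W(1) g(4)] by (rule close_on_mono[OF order.refl subset_UNIV])
    ultimately have "close_on (W O W O W) P g g'"
      using close_on_trans3[OF _ fh(3) _ order.refl] by blast
    then have "close_on W1 UNIV g g'"
      using close_on_mono[OF W(2) order.refl P(2)[OF g(1,2)]] by blast
    moreover have "W O W1 O W \<subseteq> W1 O W1 O W1"
      using entourage_subset_of_relcomp3[OF W] by (intro relcomp_mono order.refl)
    then have "W O W1 O W \<subseteq> V"
      using W1(2) by (rule order.trans)
    ultimately show ?thesis
      by (rule close_on_trans3[OF close_on_sym[OF W(1) g(3)] _ g(4)])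
  qed
  then show "\<exists>D E. finite D \<and> E \<in> entourages \<and>
      (\<forall>f\<in>K. \<forall>g\<in>K. close_on E D f g \<longrightarrow> close_on V UNIV f g)"
    using P(1) W(1) by blast
qed

section \<open>Ultrafilters and compactness\<close>

definition ultrafilter :: "'a filter \<Rightarrow> bool" where
  "ultrafilter U \<longleftrightarrow> U \<noteq> bot \<and> (\<forall>P. eventually P U \<or> eventually (\<lambda>x. \<not> P x) U)"

lemma ultrafilter_not_eventually:
  "ultrafilter U \<Longrightarrow> \<not> eventually P U \<Longrightarrow> eventually (\<lambda>x. \<not> P x) U"
  unfolding ultrafilter_def by blast

lemma Inf_filter_chain:
  fixes C :: "'a filter set"
  assumes "C \<noteq> {}" "\<And>a b. a \<in> C \<Longrightarrow> b \<in> C \<Longrightarrow> a \<le> b \<or> b \<le> a"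
    and "\<And>c. c \<in> C \<Longrightarrow> c \<le> F \<and> c \<noteq> bot"
  shows "Inf C \<le> F" "Inf C \<noteq> bot" "{P. eventually P (Inf C)} = (\<Union>c\<in>C. {P. eventually P c})"
proof -
  have directed: "\<exists>c\<in>C. c \<le> inf a b" if ab: "a \<in> C" "b \<in> C" for a b
  proof -
    consider "a \<le> b" | "b \<le> a"
      using assms(2)[OF ab] by blast
    then show ?thesis
    proof cases
      case 1
      then show ?thesis
        using ab(1) by (intro bexI[of _ a]) simp_all
    next
      case 2
      then show ?thesis
        using ab(2) by (intro bexI[of _ b]) simp_all
    qed
  qed
  have ev_Inf: "eventually P (Inf C) \<longleftrightarrow> (\<exists>c\<in>C. eventually P c)" for P
    by (rule eventually_Inf_base[OF assms(1) directed])
  obtain c where "c \<in> C"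
    using assms(1) by blast
  then show "Inf C \<le> F"
    using Inf_lower2 assms(3) by blast
  show "Inf C \<noteq> bot"
    using ev_Inf[of "\<lambda>_. False"] assms(3) by (auto simp: eventually_False)
  show "{P. eventually P (Inf C)} = (\<Union>c\<in>C. {P. eventually P c})"
    unfolding ev_Inf by blast
qed

lemma ultrafilter_if_maximal:
  assumes "U \<noteq> bot" and maximal: "\<And>U'. U' \<le> U \<Longrightarrow> U' \<noteq> bot \<Longrightarrow> U \<le> U'"
  shows "ultrafilter U"
  unfolding ultrafilter_def
proof (intro conjI assms(1) allI)
  fix P
  show "eventually P U \<or> eventually (\<lambda>x. \<not> P x) U"
  proof (rule disjCI)
    assume "\<not> eventually (\<lambda>x. \<not> P x) U"
    define U' where "U' = inf U (principal {x. P x})"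
    have ev_U': "eventually Q U' \<longleftrightarrow> eventually (\<lambda>x. P x \<longrightarrow> Q x) U" for Q
      unfolding U'_def eventually_inf_principal by simp
    have "U' \<noteq> bot"
      using \<open>\<not> eventually (\<lambda>x. \<not> P x) U\<close> ev_U'[of "\<lambda>_. False"] by (simp add: eventually_False)
    then have "U \<le> U'"
      by (rule maximal[rotated]) (simp add: U'_def)
    moreover have "eventually P U'"
      by (simp add: ev_U')
    ultimately show "eventually P U"
      by (rule filter_leD)
  qed
qed

lemma ultrafilter_le_exists:
  fixes F :: "'a filter"
  assumes "F \<noteq> bot"
  obtains U where "U \<le> F" "ultrafilter U"
proof -
  define ev where "ev G = {P. eventually P G}" for G :: "'a filter"
  have ev_le: "ev G \<subseteq> ev H \<longleftrightarrow> H \<le> G" for G H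
    unfolding ev_def le_filter_def by blast
  define \<A> where "\<A> = ev ` {G. G \<le> F \<and> G \<noteq> bot}"
  have chain: "\<Union>\<C> \<in> \<A>" if "\<C> \<noteq> {}" and \<C>: "subset.chain \<A> \<C>" for \<C>
  proof -
    obtain C where C: "C \<subseteq> {G. G \<le> F \<and> G \<noteq> bot}" "\<C> = ev ` C"
      using \<C> unfolding \<A>_def subset.chain_def subset_image_iff by blast
    have "C \<noteq> {}"
      using \<open>\<C> \<noteq> {}\<close> C(2) by blast
    have linear: "a \<le> b \<or> b \<le> a" if "a \<in> C" "b \<in> C" for a b
    proof -
      have "ev a \<subseteq> ev b \<or> ev b \<subseteq> ev a"
        using \<open>subset.chain \<A> \<C>\<close> that C(2) unfolding subset.chain_def by blast
      then show ?thesis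
        by (auto simp: ev_le)
    qed
    have "c \<le> F \<and> c \<noteq> bot" if "c \<in> C" for c
      using C(1) that by blast
    note Inf_C = Inf_filter_chain[OF \<open>C \<noteq> {}\<close> linear this]
    have "\<Union>\<C> = ev (Inf C)"
      unfolding C(2) ev_def using Inf_C(3) C(1) by blast
    then show ?thesis
      unfolding \<A>_def using Inf_C(1,2) C(1) by blast
  qed
  have "ev F \<in> \<A>"
    unfolding \<A>_def using assms by auto
  then have "\<A> \<noteq> {}"
    by blast
  from subset_Zorn_nonempty[OF this chain]
  obtain M where "M \<in> \<A>" and max: "\<And>X. X \<in> \<A> \<Longrightarrow> M \<subseteq> X \<Longrightarrow> X = M"
    by blast
  then obtain U where U: "M = ev U" "U \<le> F" "U \<noteq> bot"
    unfolding \<A>_def by blast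
  have "ultrafilter U"
  proof (rule ultrafilter_if_maximal[OF U(3)])
    fix U' assume "U' \<le> U" "U' \<noteq> bot"
    then have "ev U' \<in> \<A>"
      unfolding \<A>_def using order.trans[OF \<open>U' \<le> U\<close> U(2)] by blast
    moreover have "M \<subseteq> ev U'"
      unfolding U(1) using \<open>U' \<le> U\<close> by (simp add: ev_le)
    ultimately have "ev U' = ev U"
      using max U(1) by blast
    then show "U \<le> U'"
      by (simp add: ev_le[symmetric])
  qed
  with U(2) show thesis
    by (rule that)
qed

lemma compactin_ultrafilter_limit:
  assumes "K \<subseteq> topspace X"
    and lim: "\<And>U. ultrafilter U \<Longrightarrow> eventually (\<lambda>x. x \<in> K) U \<Longrightarrow> \<exists>l\<in>K. limitin X id l U"
  shows "compactin X K"
  unfolding compactin_def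
proof (intro conjI assms allI impI)
  fix \<U> assume \<U>: "(\<forall>U\<in>\<U>. openin X U) \<and> K \<subseteq> \<Union>\<U>"
  show "\<exists>\<F>. finite \<F> \<and> \<F> \<subseteq> \<U> \<and> K \<subseteq> \<Union>\<F>"
  proof (rule ccontr)
    assume no_cover: "\<not> (\<exists>\<F>. finite \<F> \<and> \<F> \<subseteq> \<U> \<and> K \<subseteq> \<Union>\<F>)"
    define B where "B = {\<V>. finite \<V> \<and> \<V> \<subseteq> \<U>}"
    define F where "F = (INF \<V>\<in>B. principal (K - \<Union>\<V>))"
    have ev_F: "eventually P F \<longleftrightarrow> (\<exists>\<V>\<in>B. \<forall>x\<in>K - \<Union>\<V>. P x)" for P
      unfolding F_def eventually_principal[symmetric]
    proof (rule eventually_INF_base)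
      show "B \<noteq> {}"
        unfolding B_def by blast
      fix \<V> \<W> assume "\<V> \<in> B" "\<W> \<in> B"
      then show "\<exists>\<X>\<in>B. principal (K - \<Union>\<X>) \<le> inf (principal (K - \<Union>\<V>)) (principal (K - \<Union>\<W>))"
        unfolding B_def by (intro bexI[of _ "\<V> \<union> \<W>"]) auto
    qed
    have "F \<noteq> bot"
      using no_cover unfolding eventually_False[symmetric] ev_F B_def by blast
    then obtain U where U: "U \<le> F" "ultrafilter U"
      by (rule ultrafilter_le_exists)
    have "eventually (\<lambda>x. x \<in> K) U"
      using U(1) ev_F[of "\<lambda>x. x \<in> K"] unfolding B_def le_filter_def by blast
    then obtain l where "l \<in> K" "limitin X id l U"
      using lim U(2) by blast
    then obtain V where V: "V \<in> \<U>" "l \<in> V" "eventually (\<lambda>x. x \<in> V) U"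
      using \<U> unfolding limitin_def by auto
    have "eventually (\<lambda>x. x \<notin> V) U"
      using U(1) ev_F[of "\<lambda>x. x \<notin> V"] V(1) unfolding B_def le_filter_def by blast
    with V(3) have "eventually (\<lambda>_. False) U"
      by (rule eventually_elim2) simp
    with U(2) show False
      unfolding ultrafilter_def by (simp add: eventually_False)
  qed
qed

section \<open>Limits of sets along an ultrafilter\<close>

text \<open>For an ultrafilter U this is the Kuratowski limit of the sets A h along U.\<close>

definition ultralimit_set :: "'h filter \<Rightarrow> ('h \<Rightarrow> 'b::uniform_space set) \<Rightarrow> 'b set" where
  "ultralimit_set U A = {y. \<forall>V\<in>entourages. eventually (\<lambda>h. A h \<inter> V `` {y} \<noteq> {}) U}"

lemma ultralimit_set_avoid:
  assumes "ultrafilter U" "compact E" "E \<inter> ultralimit_set U A = {}"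
  shows "eventually (\<lambda>h. A h \<inter> E = {}) U"
proof -
  have "\<exists>V. V \<in> entourages \<and> eventually (\<lambda>h. A h \<inter> V `` {z} = {}) U" if "z \<in> E" for z
  proof -
    obtain V where "V \<in> entourages" "\<not> eventually (\<lambda>h. A h \<inter> V `` {z} \<noteq> {}) U"
      using assms(3) \<open>z \<in> E\<close> unfolding ultralimit_set_def by blast
    with ultrafilter_not_eventually[OF assms(1)] show ?thesis
      by auto
  qed
  then obtain V where V:
    "\<And>z. z \<in> E \<Longrightarrow> V z \<in> entourages \<and> eventually (\<lambda>h. A h \<inter> V z `` {z} = {}) U"
    by metis
  then have "\<And>z. z \<in> E \<Longrightarrow> V z \<in> entourages"
    by blast
  then obtain Z where Z: "Z \<subseteq> E" "finite Z" "E \<subseteq> (\<Union>z\<in>Z. V z `` {z})"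
    by (rule compact_entourage_cover[OF assms(2)])
  have "eventually (\<lambda>h. \<forall>z\<in>Z. A h \<inter> V z `` {z} = {}) U"
    using Z(1,2) V by (intro eventually_ball_finite) auto
  then show ?thesis
    by (rule eventually_mono) (use Z(3) in blast)
qed

lemma closed_ultralimit_set:
  fixes A :: "'h \<Rightarrow> 'b::uniform_space set"
  shows "closed (ultralimit_set U A)"
proof -
  have "y \<in> ultralimit_set U A" if y: "y \<in> closure (ultralimit_set U A)" for y
    unfolding ultralimit_set_def
  proof (intro CollectI ballI)
    fix V :: "('b \<times> 'b) set" assume "V \<in> entourages"
    then obtain W where W: "W \<in> entourages" "W O W \<subseteq> V"
      by (rule entourage_split)
    then obtain y' where "y' \<in> ultralimit_set U A" "(y, y') \<in> W"
      using y unfolding closure_entourages by blast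
    then have "eventually (\<lambda>h. A h \<inter> W `` {y'} \<noteq> {}) U"
      using W(1) unfolding ultralimit_set_def by blast
    then show "eventually (\<lambda>h. A h \<inter> V `` {y} \<noteq> {}) U"
      by (rule eventually_mono) (use W(2) \<open>(y, y') \<in> W\<close> in blast)
  qed
  then show ?thesis
    using closure_subset_eq by blast
qed

lemma ultralimit_set_subset:
  assumes "U \<noteq> bot" "closed C" "eventually (\<lambda>h. A h \<subseteq> C) U"
  shows "ultralimit_set U A \<subseteq> C"
proof
  fix y assume y: "y \<in> ultralimit_set U A"
  have "\<exists>z\<in>C. (y, z) \<in> V" if "V \<in> entourages" for V
  proof -
    have "eventually (\<lambda>h. A h \<subseteq> C \<and> A h \<inter> V `` {y} \<noteq> {}) U"
      using y that assms(3) unfolding ultralimit_set_def by (auto intro: eventually_conj)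
    then show ?thesis
      using eventually_happens'[OF assms(1)] by blast
  qed
  then have "y \<in> closure C"
    unfolding closure_entourages by blast
  with assms(2) show "y \<in> C"
    by (simp add: closure_closed)
qed

lemma compact_ultralimit_set:
  assumes "U \<noteq> bot" "compact C" "closed C" "eventually (\<lambda>h. A h \<subseteq> C) U"
  shows "compact (ultralimit_set U A)"
proof -
  have "ultralimit_set U A = C \<inter> ultralimit_set U A"
    using ultralimit_set_subset[OF assms(1,3,4)] by blast
  then show ?thesis
    using compact_Int_closed[OF assms(2) closed_ultralimit_set[of U A]] by simp
qed

lemma ultralimit_set_nonempty:
  assumes "ultrafilter U" "compact C" "eventually (\<lambda>h. A h \<noteq> {} \<and> A h \<subseteq> C) U"
  shows "ultralimit_set U A \<noteq> {}"
proof
  assume "ultralimit_set U A = {}"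
  then have "eventually (\<lambda>h. A h \<inter> C = {}) U"
    using ultralimit_set_avoid[OF assms(1,2)] by blast
  with assms(3) have "eventually (\<lambda>_. False) U"
    by (rule eventually_elim2) blast
  with assms(1) show False
    unfolding ultrafilter_def by (simp add: eventually_False)
qed

lemma eventually_subset_Image_ultralimit_set:
  assumes "ultrafilter U" "compact C" "eventually (\<lambda>h. A h \<subseteq> C) U" "W \<in> entourages"
  shows "eventually (\<lambda>h. A h \<subseteq> W `` ultralimit_set U A) U"
proof -
  define L where "L = ultralimit_set U A"
  have "compact (C - interior (W `` L))"
    using compact_diff[OF assms(2) open_interior] .
  moreover have "L \<subseteq> interior (W `` L)"
    using subset_interior_entourage_Image[OF assms(4)] .
  ultimately have "eventually (\<lambda>h. A h \<inter> (C - interior (W `` L)) = {}) U"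
    unfolding L_def by (intro ultralimit_set_avoid[OF assms(1)]) auto
  with assms(3) show ?thesis
    unfolding L_def[symmetric]
    by (rule eventually_elim2) (use interior_subset[of "W `` L"] in blast)
qed

lemma eventually_hausdorff_close_ultralimit_set:
  assumes "ultrafilter U" "compact C" "closed C" "eventually (\<lambda>h. A h \<subseteq> C) U" "V \<in> entourages"
  shows "eventually (\<lambda>h. hausdorff_close V (A h) (ultralimit_set U A)) U"
proof -
  define L where "L = ultralimit_set U A"
  have "U \<noteq> bot"
    using assms(1) unfolding ultrafilter_def by blast
  have "compact L"
    unfolding L_def using compact_ultralimit_set[OF \<open>U \<noteq> bot\<close> assms(2-4)] .
  obtain W where W: "W \<in> entourages" "W O W \<subseteq> V"
    using assms(5) by (rule entourage_split)
  obtain Y where Y: "Y \<subseteq> L" "finite Y" "L \<subseteq> (\<Union>y\<in>Y. W `` {y})"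
    by (rule compact_entourage_cover[OF \<open>compact L\<close> W(1)])
  have "eventually (\<lambda>h. \<forall>y\<in>Y. A h \<inter> W `` {y} \<noteq> {}) U"
    using Y(1,2) W(1) unfolding L_def ultralimit_set_def by (intro eventually_ball_finite) auto
  with eventually_subset_Image_ultralimit_set[OF assms(1,2,4) W(1)] show ?thesis
    unfolding L_def[symmetric]
  proof (rule eventually_elim2)
    fix h assume h: "A h \<subseteq> W `` L" "\<forall>y\<in>Y. A h \<inter> W `` {y} \<noteq> {}"
    have "\<exists>y\<in>L. (a, y) \<in> V" if "a \<in> A h" for a
    proof -
      obtain y where "y \<in> L" "(y, a) \<in> W"
        using h(1) \<open>a \<in> A h\<close> by blast
      then show ?thesis
        using entourage_sym[OF W(1)] W(2) entourage_subset_relcomp[OF W(1)] by blast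
    qed
    moreover have "\<exists>a\<in>A h. (a, b) \<in> V" if "b \<in> L" for b
    proof -
      obtain y where "y \<in> Y" "(y, b) \<in> W"
        using Y(3) \<open>b \<in> L\<close> by blast
      moreover obtain a where "a \<in> A h" "(y, a) \<in> W"
        using h(2) \<open>y \<in> Y\<close> by blast
      ultimately show ?thesis
        using entourage_sym[OF W(1)] W(2) by blast
    qed
    ultimately show "hausdorff_close V (A h) L"
      unfolding hausdorff_close_def by blast
  qed
qed

section \<open>Uniform limits of continuous multifunctions\<close>

lemma usc_mf_uniform_limit:
  fixes g :: "'a::topological_space \<Rightarrow> 'b::uniform_space set"
  assumes "\<And>x. compact (g x)"
    and approx: "\<And>V. V \<in> entourages \<Longrightarrow> \<exists>h. usc_mf h \<and> close_on V UNIV h g"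
  shows "usc_mf g"
  unfolding usc_mf_def
proof (intro allI impI)
  fix x and G :: "'b set" assume G: "open G \<and> g x \<subseteq> G"
  then have "open G" "g x \<subseteq> G"
    by blast+
  then obtain E where E: "E \<in> entourages" "E `` g x \<subseteq> G"
    by (rule compact_entourage_Image_subset[OF assms(1)])
  obtain W where W: "W \<in> entourages" "W O W O W \<subseteq> E"
    using E(1) by (rule entourage_split3)
  obtain h where h: "usc_mf h" "close_on W UNIV h g"
    using approx[OF W(1)] by blast
  have "h x \<subseteq> interior (W `` h x)"
    using subset_interior_entourage_Image[OF W(1)] .
  then obtain U where U: "open U" "x \<in> U" "\<Union>(h ` U) \<subseteq> interior (W `` h x)"
    using h(1) unfolding usc_mf_def by (meson open_interior)
  have "w \<in> G" if "u \<in> U" "w \<in> g u" for u w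
  proof -
    obtain a where "a \<in> h u" "(a, w) \<in> W"
      using h(2) \<open>w \<in> g u\<close> unfolding close_on_def hausdorff_close_def by blast
    moreover have "a \<in> W `` h x"
      using U(3) \<open>u \<in> U\<close> \<open>a \<in> h u\<close> interior_subset[of "W `` h x"] by blast
    then obtain z where "z \<in> h x" "(z, a) \<in> W"
      by blast
    moreover obtain b where "b \<in> g x" "(z, b) \<in> W"
      using h(2) \<open>z \<in> h x\<close> unfolding close_on_def hausdorff_close_def by blast
    ultimately have "(b, w) \<in> E"
      using W(2) entourage_sym[OF W(1)] by blast
    then show "w \<in> G"
      using E(2) \<open>b \<in> g x\<close> by blast
  qed
  then show "\<exists>U. open U \<and> x \<in> U \<and> \<Union>(g ` U) \<subseteq> G"
    using U(1,2) by blast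
qed

lemma lsc_mf_uniform_limit:
  fixes g :: "'a::topological_space \<Rightarrow> 'b::uniform_space set"
  assumes approx: "\<And>V. V \<in> entourages \<Longrightarrow> \<exists>h. lsc_mf h \<and> close_on V UNIV h g"
  shows "lsc_mf g"
  unfolding lsc_mf_def
proof (intro allI impI)
  fix x and G :: "'b set" assume G: "open G \<and> g x \<inter> G \<noteq> {}"
  then obtain y where "y \<in> g x" "y \<in> G"
    by blast
  from G have "open G"
    by blast
  then obtain E where E: "E \<in> entourages" "E `` {y} \<subseteq> G"
    using \<open>y \<in> G\<close> by (rule open_contains_entourage_Image)
  obtain W where W: "W \<in> entourages" "W O W O W \<subseteq> E"
    using E(1) by (rule entourage_split3)
  obtain h where h: "lsc_mf h" "close_on W UNIV h g"
    using approx[OF W(1)] by blast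
  obtain z where "z \<in> h x" "(z, y) \<in> W"
    using h(2) \<open>y \<in> g x\<close> unfolding close_on_def hausdorff_close_def by blast
  have "z \<in> interior (W `` {z})"
    using subset_interior_entourage_Image[OF W(1), of "{z}"] by blast
  with \<open>z \<in> h x\<close> have "h x \<inter> interior (W `` {z}) \<noteq> {}"
    by blast
  then obtain U where U: "open U" "x \<in> U" "\<forall>u\<in>U. h u \<inter> interior (W `` {z}) \<noteq> {}"
    using h(1) open_interior unfolding lsc_mf_def by blast
  have "g u \<inter> G \<noteq> {}" if "u \<in> U" for u
  proof -
    obtain w where "w \<in> h u" "(z, w) \<in> W"
      using U(3) \<open>u \<in> U\<close> interior_subset[of "W `` {z}"] by blast
    moreover obtain v where "v \<in> g u" "(w, v) \<in> W"
      using h(2) \<open>w \<in> h u\<close> unfolding close_on_def hausdorff_close_def by blast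
    moreover have "(y, z) \<in> W"
      using entourage_sym[OF W(1) \<open>(z, y) \<in> W\<close>] .
    ultimately have "v \<in> E `` {y}"
      using W(2) by blast
    then show ?thesis
      using E(2) \<open>v \<in> g u\<close> by blast
  qed
  then show "\<exists>U. open U \<and> x \<in> U \<and> (\<forall>u\<in>U. g u \<inter> G \<noteq> {})"
    using U(1,2) by blast
qed

lemma CMF_uniform_limit:
  assumes "\<And>x. g x \<noteq> {} \<and> compact (g x)"
    and approx: "\<And>V. V \<in> entourages \<Longrightarrow> \<exists>h\<in>CMF. close_on V UNIV h g"
  shows "g \<in> CMF"
proof -
  have "usc_mf g"
  proof (rule usc_mf_uniform_limit)
    show "\<exists>h. usc_mf h \<and> close_on V UNIV h g" if "V \<in> entourages" for V
      using approx[OF that] unfolding CMF_def by blast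
  qed (use assms(1) in blast)
  moreover have "lsc_mf g"
  proof (rule lsc_mf_uniform_limit)
    show "\<exists>h. lsc_mf h \<and> close_on V UNIV h g" if "V \<in> entourages" for V
      using approx[OF that] unfolding CMF_def by blast
  qed
  ultimately show ?thesis
    using assms(1) by (simp add: CMF_def)
qed

section \<open>Relative compactness\<close>

lemma eventually_close_on_UNIV_of_pointwise:
  assumes "U \<noteq> bot" "extension_property finite K" "eventually (\<lambda>h. h \<in> K) U"
    and pointwise: "\<And>x V. V \<in> entourages \<Longrightarrow> eventually (\<lambda>h. hausdorff_close V (h x) (g x)) U"
    and "V \<in> entourages"
  shows "eventually (\<lambda>h. h \<in> K \<and> close_on V UNIV h g) U"
proof -
  obtain V1 where V1: "V1 \<in> entourages" "V1 O V1 \<subseteq> V"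
    using assms(5) by (rule entourage_split)
  obtain P E where PE: "finite P" "E \<in> entourages"
    "\<And>h1 h2. h1 \<in> K \<Longrightarrow> h2 \<in> K \<Longrightarrow> close_on E P h1 h2 \<Longrightarrow> close_on V1 UNIV h1 h2"
    using extension_propertyE[OF assms(2) V1(1)] by blast
  obtain E1 where E1: "E1 \<in> entourages" "E1 O E1 \<subseteq> E"
    using PE(2) by (rule entourage_split)
  have "eventually (\<lambda>h. \<forall>p\<in>P. hausdorff_close E1 (h p) (g p)) U"
    using PE(1) pointwise[OF E1(1)] by (intro eventually_ball_finite) auto
  with assms(3) have near: "eventually (\<lambda>h. h \<in> K \<and> close_on E1 P h g) U"
    unfolding close_on_def by (rule eventually_conj)
  text \<open>Any two members of K that are close to the limit on P are uniformly close, and at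
    each point some member is also close to the limit there.\<close>
  show ?thesis
  proof (rule eventually_mono[OF near], safe)
    fix h1 assume h1: "h1 \<in> K" "close_on E1 P h1 g"
    show "close_on V UNIV h1 g"
      unfolding close_on_def
    proof
      fix x
      from near pointwise[OF V1(1)]
      have "eventually (\<lambda>h. (h \<in> K \<and> close_on E1 P h g) \<and> hausdorff_close V1 (h x) (g x)) U"
        by (rule eventually_conj)
      then obtain h2 where h2: "h2 \<in> K" "close_on E1 P h2 g" "hausdorff_close V1 (h2 x) (g x)"
        using eventually_happens'[OF assms(1)] by blast
      have "close_on (E1 O E1) P h1 h2"
        using close_on_trans[OF h1(2) close_on_sym[OF E1(1) h2(2)]] .
      then have "close_on V1 UNIV h1 h2"
        using PE(3)[OF h1(1) h2(1)] close_on_mono[OF E1(2) order.refl] by blast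
      then have "hausdorff_close (V1 O V1) (h1 x) (g x)"
        using hausdorff_close_trans h2(3) unfolding close_on_def by blast
      then show "hausdorff_close V (h1 x) (g x)"
        using V1(2) by (rule hausdorff_close_mono[rotated])
    qed
  qed
qed

lemma ultrafilter_uniform_limit:
  fixes K :: "('a::topological_space \<Rightarrow> 'b::uniform_space set) set"
  assumes "ultrafilter U" "eventually (\<lambda>h. h \<in> K) U" "K \<subseteq> CMF" "extension_property finite K"
    and "\<And>x. compact (C x)" "\<And>x. closed (C x)" "\<And>h x. h \<in> K \<Longrightarrow> h x \<subseteq> C x"
  shows "\<exists>g\<in>CMF. \<forall>V\<in>entourages. eventually (\<lambda>h. h \<in> K \<and> close_on V UNIV h g) U"
proof -
  have "U \<noteq> bot"
    using assms(1) unfolding ultrafilter_def by blast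
  define g where "g x = ultralimit_set U (\<lambda>h. h x)" for x
  have bounded: "eventually (\<lambda>h. h x \<noteq> {} \<and> h x \<subseteq> C x) U" for x
    using assms(2) by (rule eventually_mono) (use assms(3,7) CMF_nonempty in blast)
  then have inside: "eventually (\<lambda>h. h x \<subseteq> C x) U" for x
    by (rule eventually_mono) blast
  have "g x \<noteq> {}" for x
    unfolding g_def using ultralimit_set_nonempty[OF assms(1,5) bounded] .
  moreover have "compact (g x)" for x
    unfolding g_def using compact_ultralimit_set[OF \<open>U \<noteq> bot\<close> assms(5,6) inside] .
  moreover have pointwise: "eventually (\<lambda>h. hausdorff_close V (h x) (g x)) U"
    if "V \<in> entourages" for x V
    unfolding g_def using eventually_hausdorff_close_ultralimit_set[OF assms(1,5,6) inside that] .
  have uniform: "eventually (\<lambda>h. h \<in> K \<and> close_on V UNIV h g) U" if "V \<in> entourages" for V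
    using eventually_close_on_UNIV_of_pointwise[OF \<open>U \<noteq> bot\<close> assms(4,2) pointwise that] .
  have "\<exists>h\<in>CMF. close_on V UNIV h g" if "V \<in> entourages" for V
    using eventually_happens'[OF \<open>U \<noteq> bot\<close> uniform[OF that]] assms(3) by blast
  ultimately have "g \<in> CMF"
    by (intro CMF_uniform_limit) blast+
  with uniform show ?thesis
    by blast
qed

lemma uniform_limit_in_uc_closure:
  fixes g :: "'a::topological_space \<Rightarrow> 'b::uniform_space set"
  assumes "K \<subseteq> CMF" "U \<noteq> bot" "g \<in> CMF"
    and near: "\<And>V. V \<in> entourages \<Longrightarrow> eventually (\<lambda>h. h \<in> K \<and> close_on V UNIV h g) U"
  shows "g \<in> uc_topology closure_of K" "limitin uc_topology id g U"
proof -
  show "g \<in> uc_topology closure_of K"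
    unfolding in_uc_closure_iff[OF assms(1)]
  proof (intro conjI assms(3) ballI)
    fix V :: "('b \<times> 'b) set" assume "V \<in> entourages"
    then obtain h where "h \<in> K" "close_on V UNIV h g"
      using eventually_happens'[OF assms(2) near] by blast
    then show "\<exists>h\<in>K. close_on V UNIV g h"
      using close_on_sym[OF \<open>V \<in> entourages\<close>] by blast
  qed
  show "limitin uc_topology id g U"
    unfolding limitin_def topspace_uc_topology
  proof (intro conjI assms(3) allI impI)
    fix T assume "openin uc_topology T \<and> g \<in> T"
    then obtain V where V: "V \<in> entourages" "uc_ball V g \<subseteq> T"
      using openin_uc_topology_ball by blast
    have "h \<in> T" if "h \<in> K" "close_on V UNIV h g" for h
      using V(2) assms(1) close_on_sym[OF V(1) that(2)] that(1) unfolding uc_ball_def by blast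
    with near[OF V(1)] show "eventually (\<lambda>h. id h \<in> T) U"
      by (auto elim: eventually_mono)
  qed
qed

lemma uc_closure_values_subset:
  assumes "F \<subseteq> CMF" "h \<in> uc_topology closure_of F"
  shows "h x \<subseteq> closure (\<Union>f\<in>F. f x)"
proof
  fix y assume "y \<in> h x"
  have "\<exists>z\<in>\<Union>f\<in>F. f x. (y, z) \<in> V" if "V \<in> entourages" for V
  proof -
    from assms(2) that obtain f where "f \<in> F" "close_on V UNIV h f"
      unfolding in_uc_closure_iff[OF assms(1)] by blast
    then show ?thesis
      using \<open>y \<in> h x\<close> unfolding close_on_def hausdorff_close_def by blast
  qed
  then show "y \<in> closure (\<Union>f\<in>F. f x)"
    unfolding closure_entourages by blast
qed

lemma extension_property_imp_rel_uc_compact: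
  fixes F :: "('a::topological_space \<Rightarrow> 'b::uniform_space set) set"
  assumes "F \<subseteq> CMF" "pointwise_rel_compact F" "extension_property finite F"
  shows "rel_uc_compact F"
  unfolding rel_uc_compact_def
proof (rule compactin_ultrafilter_limit)
  define K where "K = uc_topology closure_of F"
  show "K \<subseteq> topspace uc_topology"
    unfolding K_def by (rule closure_of_subset_topspace)
  then have "K \<subseteq> CMF"
    by (simp add: topspace_uc_topology)
  fix U assume U: "ultrafilter U" "eventually (\<lambda>h. h \<in> K) U"
  have "extension_property finite K"
    unfolding K_def using extension_property_uc_closure[OF assms(1,3)] .
  moreover have "compact (closure (\<Union>f\<in>F. f x))" for x
    using assms(2) unfolding pointwise_rel_compact_def by simp
  moreover have "closed (closure (\<Union>f\<in>F. f x))" for x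
    by (rule closed_closure)
  moreover have "h x \<subseteq> closure (\<Union>f\<in>F. f x)" if "h \<in> K" for h x
    using uc_closure_values_subset[OF assms(1)] that unfolding K_def .
  ultimately have "\<exists>g\<in>CMF. \<forall>V\<in>entourages. eventually (\<lambda>h. h \<in> K \<and> close_on V UNIV h g) U"
    by (rule ultrafilter_uniform_limit[OF U \<open>K \<subseteq> CMF\<close>])
  then obtain g where g: "g \<in> CMF"
    "\<And>V. V \<in> entourages \<Longrightarrow> eventually (\<lambda>h. h \<in> K \<and> close_on V UNIV h g) U"
    by blast
  have "U \<noteq> bot"
    using U(1) unfolding ultrafilter_def by blast
  note limit = uniform_limit_in_uc_closure[OF \<open>K \<subseteq> CMF\<close> this g]
  have "g \<in> K"
    using limit(1) unfolding K_def closure_of_closure_of .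
  with limit(2) show "\<exists>g\<in>K. limitin uc_topology id g U"
    by blast
qed

theorem corollary3p3:
  fixes F :: "('a::topological_space \<Rightarrow> 'b::{uniform_space, t2_space} set) set"
  assumes "locally_compact_space (euclidean :: 'a topology)"
    and "F \<subseteq> CMF"
    and "pointwise_rel_compact F"
    and "equicontinuous_mf F"
  shows "(rel_uc_compact F \<longleftrightarrow> finite_extension_property F)
       \<and> (finite_extension_property F \<longleftrightarrow> compact_extension_property F)"
proof -
  have "F \<subseteq> uc_topology closure_of F"
    using assms(2) by (simp add: closure_of_subset topspace_uc_topology)
  then have "rel_uc_compact F \<Longrightarrow> extension_property finite F"
    unfolding rel_uc_compact_def
    by (rule extension_property_subset[OF _ compactin_uc_imp_extension_property])
  moreover have "extension_property finite F \<Longrightarrow> rel_uc_compact F"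
    by (rule extension_property_imp_rel_uc_compact[OF assms(2,3)])
  moreover have "extension_property finite F \<Longrightarrow> extension_property compact F"
    by (rule extension_property_mono[OF finite_imp_compact])
  moreover have "extension_property compact F \<Longrightarrow> extension_property finite F"
    by (rule extension_property_compact_imp_finite[OF assms(4)])
  ultimately show ?thesis
    unfolding finite_extension_property_iff[OF assms(2)] compact_extension_property_iff[OF assms(2)]
    by blast
qed

end
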